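(* Let $V\in{}_B\mathrm{Rep}^A$ and $W\in{}_A\mathrm{Rep}^C$. Then there is a unitary (inner-product preserving, bijective) isomorphism of unitary DK-representations between ${}_V\mathrm{Ind}(W)$ and $\mathrm{Ind}^W(V)$, both equipped with the tensor product inner product on $V\odot W$.
   Context: $A$ is a CQG Hopf $*$-algebra: a complex Hopf algebra $(A,\Delta_A,\varepsilon_A,S_A)$ with an anti-linear involution making it a $*$-algebra with $\Delta_A$ a $*$-homomorphism, admitting a state $\Phi_A$ with $(\Phi_A\otimes\mathrm{id})\Delta_A(a)=\Phi_A(a)1=(\mathrm{id}\otimes\Phi_A)\Delta_A(a)$. Put $a^\dagger=S_A(a)^*$. $B\subseteq A$ is a unital right coideal $*$-subalgebra ($\Delta_A(B)\subseteq B\odot A$). Let $B_+=B\cap\ker\varepsilon_A$, $C=A/AB_+$ with quotient map $\pi_C$; $C$ is a coalgebra (comultiplication induced by $\Delta_A$), a left $A$-module via $a\cdot\pi_C(a')=\pi_C(aa')$, with anti-linear involution $\pi_C(a)^\dagger=\pi_C(a^\dagger)$. Sweedler notation is used. For $(X,Y)\in\{(B,A),(A,C),(B,C)\}$, ${}_X\mathrm{Mod}^Y$ is the category of left $X$-modules $V$ with a right $Y$-comodule structure $v\mapsto v_{(0)}\otimes v_{(1)}$ such that $(xv)_{(0)}\otimes(xv)_{(1)}=x_{(1)}v_{(0)}\otimes x_{(2)}v_{(1)}$. ${}_X\mathrm{Rep}^Y$ consists of those $V$ which are pre-Hilbert spaces with $\langle v,xw\rangle=\langle x^*v,w\rangle$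 and $\langle v,w_{(0)}\rangle w_{(1)}=\langle v_{(0)},w\rangle v_{(1)}^\dagger$ for all $v,w\in V$, $x\in X$. ${}_V\mathrm{Ind}(W)$: $V\odot W$ with $b(v\otimes w)=bv\otimes w$ and coaction $v\otimes w\mapsto v_{(0)}\otimes w_{(0)}\otimes v_{(1)}w_{(1)}$. $\mathrm{Ind}^W(V)$: $V\odot W$ with $b(v\otimes w)=b_{(1)}v\otimes b_{(2)}w$ and coaction $v\otimes w\mapsto v\otimes w_{(0)}\otimes w_{(1)}$. Both are in ${}_B\mathrm{Rep}^C$ with the tensor product inner product. *)

theory Defs
  imports Complex_Main
begin

class cvec = ab_group_add +
  fixes cscale :: "complex \<Rightarrow> 'a \<Rightarrow> 'a"
  assumes cscale_right_distrib: "cscale c (x + y) = cscale c x + cscale c y"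
    and cscale_left_distrib: "cscale (c + d) x = cscale c x + cscale d x"
    and cscale_cscale: "cscale c (cscale d x) = cscale (c * d) x"
    and cscale_one: "cscale 1 x = x"

class calg = cvec + ring_1 +
  assumes cscale_mult_left: "cscale c (x * y) = cscale c x * y"
    and cscale_mult_right: "cscale c (x * y) = x * cscale c y"

instantiation complex :: calg
begin
definition cscale_complex :: "complex \<Rightarrow> complex \<Rightarrow> complex" where
  "cscale_complex c x = c * x"
instance by standard (simp_all add: cscale_complex_def algebra_simps)
end

definition clinear :: "('a::cvec \<Rightarrow> 'b::cvec) \<Rightarrow> bool" where
  "clinear f \<longleftrightarrow> (\<forall>x y. f (x + y) = f x + f y) \<and> (\<forall>c x. f (cscale c x) = cscale c (f x))"

definition antilinear :: "('a::cvec \<Rightarrow> 'b::cvec) \<Rightarrow> bool" where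
  "antilinear f \<longleftrightarrow> (\<forall>x y. f (x + y) = f x + f y) \<and> (\<forall>c x. f (cscale c x) = cscale (cnj c) (f x))"

definition cbilinear :: "('a::cvec \<Rightarrow> 'b::cvec \<Rightarrow> complex) \<Rightarrow> bool" where
  "cbilinear \<beta> \<longleftrightarrow> (\<forall>y. clinear (\<lambda>x. \<beta> x y)) \<and> (\<forall>x. clinear (\<beta> x))"

definition ctrilinear :: "('a::cvec \<Rightarrow> 'b::cvec \<Rightarrow> 'c::cvec \<Rightarrow> complex) \<Rightarrow> bool" where
  "ctrilinear \<gamma> \<longleftrightarrow> (\<forall>y z. clinear (\<lambda>x. \<gamma> x y z)) \<and> (\<forall>x z. clinear (\<lambda>y. \<gamma> x y z))
                      \<and> (\<forall>x y. clinear (\<gamma> x y))"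

section \<open>Algebraic tensor products\<close>

text \<open>The algebraic tensor product V \<odot> W is represented through its embedding into the
  algebraic dual of the space of bilinear forms on V \<times> W: the elementary tensor v \<otimes> w is
  the evaluation functional at (v,w).  A functional is a tensor if, on bilinear forms, it agrees
  with a finite sum of elementary tensors; two tensors are equal iff they agree on all bilinear
  forms.  Three-fold tensors are handled in the same way via trilinear forms.
  Sweedler notation  x_(1) \<otimes> x_(2)  corresponds to  Delta x (\<lambda>x1 x2. ...).\<close>

type_synonym ('v, 'w) tens = "('v \<Rightarrow> 'w \<Rightarrow> complex) \<Rightarrow> complex"
type_synonym ('u, 'v, 'w) tens3 = "('u \<Rightarrow> 'v \<Rightarrow> 'w \<Rightarrow> complex) \<Rightarrow> complex"

definition tens :: "'v \<Rightarrow> 'w \<Rightarrow> ('v, 'w) tens" where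
  "tens v w = (\<lambda>\<beta>. \<beta> v w)"

definition is_tensor :: "('v::cvec, 'w::cvec) tens \<Rightarrow> bool" where
  "is_tensor t \<longleftrightarrow> (\<exists>xs :: ('v \<times> 'w) list. \<forall>\<beta>. cbilinear \<beta> \<longrightarrow> t \<beta> = (\<Sum>(x, y)\<leftarrow>xs. \<beta> x y))"

definition teq :: "('v::cvec, 'w::cvec) tens \<Rightarrow> ('v, 'w) tens \<Rightarrow> bool" where
  "teq t s \<longleftrightarrow> (\<forall>\<beta>. cbilinear \<beta> \<longrightarrow> t \<beta> = s \<beta>)"

definition teq3 :: "('u::cvec, 'v::cvec, 'w::cvec) tens3 \<Rightarrow> ('u, 'v, 'w) tens3 \<Rightarrow> bool" where
  "teq3 t s \<longleftrightarrow> (\<forall>\<gamma>. ctrilinear \<gamma> \<longrightarrow> t \<gamma> = s \<gamma>)"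

definition tadd :: "('v, 'w) tens \<Rightarrow> ('v, 'w) tens \<Rightarrow> ('v, 'w) tens" where
  "tadd t s = (\<lambda>\<beta>. t \<beta> + s \<beta>)"

definition tscale :: "complex \<Rightarrow> ('v, 'w) tens \<Rightarrow> ('v, 'w) tens" where
  "tscale c t = (\<lambda>\<beta>. c * t \<beta>)"

definition tlinear :: "('x::cvec \<Rightarrow> ('v::cvec, 'w::cvec) tens) \<Rightarrow> bool" where
  "tlinear d \<longleftrightarrow> (\<forall>x. is_tensor (d x))
     \<and> (\<forall>x y \<beta>. cbilinear \<beta> \<longrightarrow> d (x + y) \<beta> = d x \<beta> + d y \<beta>)
     \<and> (\<forall>c x \<beta>. cbilinear \<beta> \<longrightarrow> d (cscale c x) \<beta> = c * d x \<beta>)"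

section \<open>CQG Hopf *-algebras\<close>

definition star_involution :: "('a::calg \<Rightarrow> 'a) \<Rightarrow> bool" where
  "star_involution st \<longleftrightarrow> antilinear st \<and> (\<forall>x. st (st x) = x) \<and> (\<forall>x y. st (x * y) = st y * st x)"

definition hopf_star_algebra ::
  "('a::calg \<Rightarrow> ('a, 'a) tens) \<Rightarrow> ('a \<Rightarrow> complex) \<Rightarrow> ('a \<Rightarrow> 'a) \<Rightarrow> ('a \<Rightarrow> 'a) \<Rightarrow> bool" where
  "hopf_star_algebra \<Delta> \<epsilon> S st \<longleftrightarrow>
     tlinear \<Delta>
   \<and> (\<forall>x y \<beta>. cbilinear \<beta> \<longrightarrow> \<Delta> (x * y) \<beta> = \<Delta> x (\<lambda>x1 x2. \<Delta> y (\<lambda>y1 y2. \<beta> (x1 * y1) (x2 * y2))))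
   \<and> (\<forall>\<beta>. cbilinear \<beta> \<longrightarrow> \<Delta> 1 \<beta> = \<beta> 1 1)
   \<and> (\<forall>x \<gamma>. ctrilinear \<gamma> \<longrightarrow>
        \<Delta> x (\<lambda>x1 x2. \<Delta> x1 (\<lambda>p q. \<gamma> p q x2)) = \<Delta> x (\<lambda>x1 x2. \<Delta> x2 (\<lambda>p q. \<gamma> x1 p q)))
   \<and> clinear \<epsilon> \<and> (\<forall>x y. \<epsilon> (x * y) = \<epsilon> x * \<epsilon> y) \<and> \<epsilon> 1 = 1
   \<and> (\<forall>x \<psi>. clinear (\<psi> :: 'a \<Rightarrow> complex) \<longrightarrow>
        \<Delta> x (\<lambda>x1 x2. \<epsilon> x1 * \<psi> x2) = \<psi> x \<and> \<Delta> x (\<lambda>x1 x2. \<psi> x1 * \<epsilon> x2) = \<psi> x)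
   \<and> clinear S
   \<and> (\<forall>x \<psi>. clinear (\<psi> :: 'a \<Rightarrow> complex) \<longrightarrow>
        \<Delta> x (\<lambda>x1 x2. \<psi> (S x1 * x2)) = \<epsilon> x * \<psi> 1 \<and> \<Delta> x (\<lambda>x1 x2. \<psi> (x1 * S x2)) = \<epsilon> x * \<psi> 1)
   \<and> star_involution st
   \<and> (\<forall>x \<beta>. cbilinear \<beta> \<longrightarrow> \<Delta> (st x) \<beta> = cnj (\<Delta> x (\<lambda>x1 x2. cnj (\<beta> (st x1) (st x2)))))"

definition haar_state ::
  "('a::calg \<Rightarrow> ('a, 'a) tens) \<Rightarrow> ('a \<Rightarrow> 'a) \<Rightarrow> ('a \<Rightarrow> complex) \<Rightarrow> bool" where
  "haar_state \<Delta> st \<Phi> \<longleftrightarrow> clinear \<Phi> \<and> \<Phi> 1 = 1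
   \<and> (\<forall>x. Im (\<Phi> (st x * x)) = 0 \<and> 0 \<le> Re (\<Phi> (st x * x)))
   \<and> (\<forall>x \<psi>. clinear (\<psi> :: 'a \<Rightarrow> complex) \<longrightarrow>
        \<Delta> x (\<lambda>x1 x2. \<Phi> x1 * \<psi> x2) = \<Phi> x * \<psi> 1 \<and> \<Delta> x (\<lambda>x1 x2. \<psi> x1 * \<Phi> x2) = \<Phi> x * \<psi> 1)"

definition cqg_hopf_star_algebra ::
  "('a::calg \<Rightarrow> ('a, 'a) tens) \<Rightarrow> ('a \<Rightarrow> complex) \<Rightarrow> ('a \<Rightarrow> 'a) \<Rightarrow> ('a \<Rightarrow> 'a) \<Rightarrow> bool" where
  "cqg_hopf_star_algebra \<Delta> \<epsilon> S st \<longleftrightarrow> hopf_star_algebra \<Delta> \<epsilon> S st \<and> (\<exists>\<Phi>. haar_state \<Delta> st \<Phi>)"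

section \<open>Right coideal *-subalgebras and the quotient coalgebra C = A / A B_+\<close>

text \<open>B is given as a complex algebra together with an injective unital algebra
  homomorphism iota into A, closed under star (starB), whose image is a right coideal:
  Delta(iota b) = (iota \<otimes> id)(deltaB b) with deltaB b \<in> B \<odot> A.\<close>
definition right_coideal_star_subalg ::
  "('a::calg \<Rightarrow> ('a, 'a) tens) \<Rightarrow> ('a \<Rightarrow> 'a) \<Rightarrow> ('b::calg \<Rightarrow> 'a) \<Rightarrow> ('b \<Rightarrow> 'b)
   \<Rightarrow> ('b \<Rightarrow> ('b, 'a) tens) \<Rightarrow> bool" where
  "right_coideal_star_subalg \<Delta> st \<iota> stB \<delta>B \<longleftrightarrow>
     inj \<iota> \<and> clinear \<iota> \<and> (\<forall>x y. \<iota> (x * y) = \<iota> x * \<iota> y) \<and> \<iota> 1 = 1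
   \<and> (\<forall>b. \<iota> (stB b) = st (\<iota> b))
   \<and> (\<forall>b. is_tensor (\<delta>B b))
   \<and> (\<forall>b \<beta>. cbilinear \<beta> \<longrightarrow> \<delta>B b (\<lambda>x y. \<beta> (\<iota> x) y) = \<Delta> (\<iota> b) \<beta>)"

definition ABplus :: "('a::calg \<Rightarrow> complex) \<Rightarrow> ('b \<Rightarrow> 'a) \<Rightarrow> 'a set" where
  "ABplus \<epsilon> \<iota> = {z. \<exists>ps :: ('a \<times> 'b) list.
       (\<forall>(a, b) \<in> set ps. \<epsilon> (\<iota> b) = 0) \<and> z = (\<Sum>(a, b)\<leftarrow>ps. a * \<iota> b)}"

text \<open>C is given as a space with a surjective linear map piC : A \<rightarrow> C with kernel A B_+,
  together with the structures induced from A (comultiplication, counit, left A-action,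
  anti-linear involution).\<close>
definition quotient_coalgebra ::
  "('a::calg \<Rightarrow> ('a, 'a) tens) \<Rightarrow> ('a \<Rightarrow> complex) \<Rightarrow> ('a \<Rightarrow> 'a) \<Rightarrow> ('a \<Rightarrow> 'a) \<Rightarrow> ('b \<Rightarrow> 'a)
   \<Rightarrow> ('a \<Rightarrow> 'c::cvec) \<Rightarrow> ('c \<Rightarrow> ('c, 'c) tens) \<Rightarrow> ('c \<Rightarrow> complex) \<Rightarrow> ('a \<Rightarrow> 'c \<Rightarrow> 'c) \<Rightarrow> ('c \<Rightarrow> 'c)
   \<Rightarrow> bool" where
  "quotient_coalgebra \<Delta> \<epsilon> S st \<iota> \<pi> \<Delta>C \<epsilon>C actC dagC \<longleftrightarrow>
     clinear \<pi> \<and> surj \<pi> \<and> (\<forall>x. \<pi> x = 0 \<longleftrightarrow> x \<in> ABplus \<epsilon> \<iota>)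
   \<and> (\<forall>x \<beta>. cbilinear \<beta> \<longrightarrow> \<Delta>C (\<pi> x) \<beta> = \<Delta> x (\<lambda>x1 x2. \<beta> (\<pi> x1) (\<pi> x2)))
   \<and> (\<forall>x. is_tensor (\<Delta>C (\<pi> x)))
   \<and> (\<forall>x. \<epsilon>C (\<pi> x) = \<epsilon> x)
   \<and> (\<forall>a x. actC a (\<pi> x) = \<pi> (a * x))
   \<and> (\<forall>x. dagC (\<pi> x) = \<pi> (st (S x)))"

definition alg_module :: "('x::calg \<Rightarrow> 'v::cvec \<Rightarrow> 'v) \<Rightarrow> bool" where
  "alg_module act \<longleftrightarrow>
     (\<forall>x x' v. act (x + x') v = act x v + act x' v)
   \<and> (\<forall>c x v. act (cscale c x) v = cscale c (act x v))
   \<and> (\<forall>x v w. act x (v + w) = act x v + act x w)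
   \<and> (\<forall>c x v. act x (cscale c v) = cscale c (act x v))
   \<and> (\<forall>v. act 1 v = v)
   \<and> (\<forall>x x' v. act (x * x') v = act x (act x' v))"

definition comodule :: "('y::cvec \<Rightarrow> ('y, 'y) tens) \<Rightarrow> ('y \<Rightarrow> complex) \<Rightarrow> ('v::cvec \<Rightarrow> ('v, 'y) tens) \<Rightarrow> bool" where
  "comodule \<Delta>Y \<epsilon>Y \<delta> \<longleftrightarrow> tlinear \<delta>
   \<and> (\<forall>v \<gamma>. ctrilinear \<gamma> \<longrightarrow>
        \<delta> v (\<lambda>v0 v1. \<delta> v0 (\<lambda>p q. \<gamma> p q v1)) = \<delta> v (\<lambda>v0 v1. \<Delta>Y v1 (\<lambda>p q. \<gamma> v0 p q)))
   \<and> (\<forall>v \<psi>. clinear (\<psi> :: 'v \<Rightarrow> complex) \<longrightarrow> \<delta> v (\<lambda>v0 v1. \<psi> v0 * \<epsilon>Y v1) = \<psi> v)"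

text \<open>Compatibility (xv)_(0) \<otimes> (xv)_(1) = x_(1) v_(0) \<otimes> x_(2) v_(1), where
  dX x = x_(1) \<otimes> x_(2) \<in> X \<odot> A and A acts on Y by actY.\<close>
definition mod_comod_compat ::
  "('x \<Rightarrow> ('x, 'a) tens) \<Rightarrow> ('a \<Rightarrow> 'y \<Rightarrow> 'y) \<Rightarrow> ('x \<Rightarrow> 'v \<Rightarrow> 'v) \<Rightarrow> ('v::cvec \<Rightarrow> ('v, 'y::cvec) tens) \<Rightarrow> bool" where
  "mod_comod_compat dX actY act \<delta> \<longleftrightarrow>
     (\<forall>x v \<beta>. cbilinear \<beta> \<longrightarrow>
        \<delta> (act x v) \<beta> = dX x (\<lambda>x1 x2. \<delta> v (\<lambda>v0 v1. \<beta> (act x1 v0) (actY x2 v1))))"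

text \<open>Pre-Hilbert space: inner product conjugate-linear in the first, linear in the second
  argument, Hermitian, positive definite.\<close>
definition pre_hilbert :: "('v::cvec \<Rightarrow> 'v \<Rightarrow> complex) \<Rightarrow> bool" where
  "pre_hilbert ip \<longleftrightarrow>
     (\<forall>x y z. ip x (y + z) = ip x y + ip x z)
   \<and> (\<forall>c x y. ip x (cscale c y) = c * ip x y)
   \<and> (\<forall>x y. ip y x = cnj (ip x y))
   \<and> (\<forall>x. Im (ip x x) = 0 \<and> 0 \<le> Re (ip x x))
   \<and> (\<forall>x. ip x x = 0 \<longrightarrow> x = 0)"

text \<open>The unitarity conditions: \<langle>v, x w\<rangle> = \<langle>x* v, w\<rangle> and
  \<langle>v, w_(0)\<rangle> w_(1) = \<langle>v_(0), w\<rangle> v_(1)^\<dagger> (an identity in Y, tested against all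
  linear functionals psi on Y).\<close>
definition rep_compat ::
  "('x \<Rightarrow> 'x) \<Rightarrow> ('y::cvec \<Rightarrow> 'y) \<Rightarrow> ('v::cvec \<Rightarrow> 'v \<Rightarrow> complex) \<Rightarrow> ('x \<Rightarrow> 'v \<Rightarrow> 'v)
   \<Rightarrow> ('v \<Rightarrow> ('v, 'y) tens) \<Rightarrow> bool" where
  "rep_compat stX dagY ip act \<delta> \<longleftrightarrow>
     (\<forall>x v w. ip v (act x w) = ip (act (stX x) v) w)
   \<and> (\<forall>v w \<psi>. clinear (\<psi> :: 'y \<Rightarrow> complex) \<longrightarrow>
        \<delta> w (\<lambda>w0 w1. ip v w0 * \<psi> w1) = cnj (\<delta> v (\<lambda>v0 v1. cnj (ip v0 w * \<psi> (dagY v1)))))"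

definition B_Rep_A ::
  "('a::calg \<Rightarrow> ('a, 'a) tens) \<Rightarrow> ('a \<Rightarrow> complex) \<Rightarrow> ('a \<Rightarrow> 'a) \<Rightarrow> ('a \<Rightarrow> 'a)
   \<Rightarrow> ('b::calg \<Rightarrow> 'b) \<Rightarrow> ('b \<Rightarrow> ('b, 'a) tens)
   \<Rightarrow> ('v::cvec \<Rightarrow> 'v \<Rightarrow> complex) \<Rightarrow> ('b \<Rightarrow> 'v \<Rightarrow> 'v) \<Rightarrow> ('v \<Rightarrow> ('v, 'a) tens) \<Rightarrow> bool" where
  "B_Rep_A \<Delta> \<epsilon> S st stB \<delta>B ip act \<delta> \<longleftrightarrow>
     pre_hilbert ip \<and> alg_module act \<and> comodule \<Delta> \<epsilon> \<delta>
   \<and> mod_comod_compat \<delta>B (\<lambda>a y. a * y) act \<delta>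
   \<and> rep_compat stB (\<lambda>a. st (S a)) ip act \<delta>"

definition A_Rep_C ::
  "('a::calg \<Rightarrow> ('a, 'a) tens) \<Rightarrow> ('a \<Rightarrow> 'a)
   \<Rightarrow> ('c::cvec \<Rightarrow> ('c, 'c) tens) \<Rightarrow> ('c \<Rightarrow> complex) \<Rightarrow> ('a \<Rightarrow> 'c \<Rightarrow> 'c) \<Rightarrow> ('c \<Rightarrow> 'c)
   \<Rightarrow> ('w::cvec \<Rightarrow> 'w \<Rightarrow> complex) \<Rightarrow> ('a \<Rightarrow> 'w \<Rightarrow> 'w) \<Rightarrow> ('w \<Rightarrow> ('w, 'c) tens) \<Rightarrow> bool" where
  "A_Rep_C \<Delta> st \<Delta>C \<epsilon>C actC dagC ip act \<delta> \<longleftrightarrow>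
     pre_hilbert ip \<and> alg_module act \<and> comodule \<Delta>C \<epsilon>C \<delta>
   \<and> mod_comod_compat \<Delta> actC act \<delta>
   \<and> rep_compat st dagC ip act \<delta>"

section \<open>The two induced representations on V \<odot> W\<close>

text \<open>Tensor product inner product: \<langle>v\<otimes>w, v'\<otimes>w'\<rangle> = \<langle>v,v'\<rangle>\<langle>w,w'\<rangle>.\<close>
definition tens_ip ::
  "('v \<Rightarrow> 'v \<Rightarrow> complex) \<Rightarrow> ('w \<Rightarrow> 'w \<Rightarrow> complex) \<Rightarrow> ('v, 'w) tens \<Rightarrow> ('v, 'w) tens \<Rightarrow> complex" where
  "tens_ip ipV ipW t s = cnj (t (\<lambda>v w. cnj (s (\<lambda>v' w'. ipV v v' * ipW w w'))))"

text \<open>{}_V Ind(W): b(v\<otimes>w) = bv \<otimes> w,  v\<otimes>w \<mapsto> v_(0) \<otimes> w_(0) \<otimes> v_(1) w_(1).\<close>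
definition indL_act :: "('b \<Rightarrow> 'v \<Rightarrow> 'v) \<Rightarrow> 'b \<Rightarrow> ('v, 'w) tens \<Rightarrow> ('v, 'w) tens" where
  "indL_act actV b t = (\<lambda>\<beta>. t (\<lambda>v w. \<beta> (actV b v) w))"

definition indL_coact ::
  "('v \<Rightarrow> ('v, 'a) tens) \<Rightarrow> ('w \<Rightarrow> ('w, 'c) tens) \<Rightarrow> ('a \<Rightarrow> 'c \<Rightarrow> 'c)
   \<Rightarrow> ('v, 'w) tens \<Rightarrow> ('v, 'w, 'c) tens3" where
  "indL_coact \<delta>V \<delta>W actC t =
     (\<lambda>\<gamma>. t (\<lambda>v w. \<delta>V v (\<lambda>v0 v1. \<delta>W w (\<lambda>w0 w1. \<gamma> v0 w0 (actC v1 w1)))))"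

text \<open>Ind^W(V): b(v\<otimes>w) = b_(1) v \<otimes> b_(2) w,  v\<otimes>w \<mapsto> v \<otimes> w_(0) \<otimes> w_(1).\<close>
definition indR_act ::
  "('b \<Rightarrow> ('b, 'a) tens) \<Rightarrow> ('b \<Rightarrow> 'v \<Rightarrow> 'v) \<Rightarrow> ('a \<Rightarrow> 'w \<Rightarrow> 'w)
   \<Rightarrow> 'b \<Rightarrow> ('v, 'w) tens \<Rightarrow> ('v, 'w) tens" where
  "indR_act \<delta>B actV actW b t = (\<lambda>\<beta>. \<delta>B b (\<lambda>b1 b2. t (\<lambda>v w. \<beta> (actV b1 v) (actW b2 w))))"

definition indR_coact :: "('w \<Rightarrow> ('w, 'c) tens) \<Rightarrow> ('v, 'w) tens \<Rightarrow> ('v, 'w, 'c) tens3" where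
  "indR_coact \<delta>W t = (\<lambda>\<gamma>. t (\<lambda>v w. \<delta>W w (\<lambda>w0 w1. \<gamma> v w0 w1)))"

text \<open>U is a unitary isomorphism of (B,C)-DK-representations from the structure
  (act1, coact1) to (act2, coact2) on V \<odot> W (both with inner product ip):
  a well-defined linear bijection of V \<odot> W, preserving the inner product, B-linear
  and C-colinear ((U \<otimes> id) \<circ> coact1 = coact2 \<circ> U).\<close>
definition unitary_iso ::
  "(('v::cvec, 'w::cvec) tens \<Rightarrow> ('v, 'w) tens \<Rightarrow> complex)
   \<Rightarrow> ('b \<Rightarrow> ('v, 'w) tens \<Rightarrow> ('v, 'w) tens) \<Rightarrow> (('v, 'w) tens \<Rightarrow> ('v, 'w, 'c::cvec) tens3)
   \<Rightarrow> ('b \<Rightarrow> ('v, 'w) tens \<Rightarrow> ('v, 'w) tens) \<Rightarrow> (('v, 'w) tens \<Rightarrow> ('v, 'w, 'c) tens3)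
   \<Rightarrow> (('v, 'w) tens \<Rightarrow> ('v, 'w) tens) \<Rightarrow> bool" where
  "unitary_iso ip act1 coact1 act2 coact2 U \<longleftrightarrow>
     (\<forall>t. is_tensor t \<longrightarrow> is_tensor (U t))
   \<and> (\<forall>t s. is_tensor t \<longrightarrow> is_tensor s \<longrightarrow> teq t s \<longrightarrow> teq (U t) (U s))
   \<and> (\<forall>t s. is_tensor t \<longrightarrow> is_tensor s \<longrightarrow> teq (U (tadd t s)) (tadd (U t) (U s)))
   \<and> (\<forall>c t. is_tensor t \<longrightarrow> teq (U (tscale c t)) (tscale c (U t)))
   \<and> (\<forall>t s. is_tensor t \<longrightarrow> is_tensor s \<longrightarrow> teq (U t) (U s) \<longrightarrow> teq t s)
   \<and> (\<forall>s. is_tensor s \<longrightarrow> (\<exists>t. is_tensor t \<and> teq (U t) s))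
   \<and> (\<forall>t s. is_tensor t \<longrightarrow> is_tensor s \<longrightarrow> ip (U t) (U s) = ip t s)
   \<and> (\<forall>b t. is_tensor t \<longrightarrow> teq (U (act1 b t)) (act2 b (U t)))
   \<and> (\<forall>t. is_tensor t \<longrightarrow>
        teq3 (coact2 (U t)) (\<lambda>\<gamma>. coact1 t (\<lambda>v w c. U (tens v w) (\<lambda>v' w'. \<gamma> v' w' c))))"

end

theory Submission
  imports Defs
begin

text \<open>The isomorphism is U(v \<otimes> w) = v_(0) \<otimes> v_(1) w, with inverse
  v \<otimes> w \<mapsto> v_(0) \<otimes> S(v_(1)) w: the two are mutually inverse by coassociativity of the
  coaction of V together with the antipode axioms.  U intertwines the B-actions because
  (bv)_(0) \<otimes> (bv)_(1) = b_(1) v_(0) \<otimes> b_(2) v_(1), and the C-coactions because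
  W is an (A, C)-module-comodule.  It is isometric because the unitarity conditions on V and W
  say exactly that its adjoint is the inverse map.\<close>

lemma cscale_zero_right: "cscale c (0::'a::cvec) = 0"
  using cscale_right_distrib[of c "0::'a" 0] by simp

lemma clinear_compose: "clinear f \<Longrightarrow> clinear g \<Longrightarrow> clinear (\<lambda>x. f (g x))"
  by (simp add: clinear_def)

lemma clinear_sum_list:
  "(\<And>l. l \<in> set L \<Longrightarrow> clinear (F l)) \<Longrightarrow> clinear (\<lambda>x. \<Sum>l\<leftarrow>L. F l x)"
proof (induction L)
  case Nil
  then show ?case by (simp add: clinear_def cscale_zero_right)
next
  case (Cons a L)
  then show ?case by (simp add: clinear_def cscale_right_distrib algebra_simps)
qed

lemma cbilinearI: "(\<And>y. clinear (\<lambda>x. \<beta> x y)) \<Longrightarrow> (\<And>x. clinear (\<beta> x)) \<Longrightarrow> cbilinear \<beta>"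
  by (simp add: cbilinear_def)

lemma cbilinear_clinear_left: "cbilinear \<beta> \<Longrightarrow> clinear (\<lambda>x. \<beta> x y)"
  by (simp add: cbilinear_def)

lemma cbilinear_clinear_right: "cbilinear \<beta> \<Longrightarrow> clinear (\<beta> x)"
  by (simp add: cbilinear_def)

lemma cbilinear_compose:
  "cbilinear \<beta> \<Longrightarrow> clinear f \<Longrightarrow> clinear g \<Longrightarrow> cbilinear (\<lambda>x y. \<beta> (f x) (g y))"
  by (simp add: cbilinear_def clinear_def)

lemma cbilinear_compose_right:
  "cbilinear \<beta> \<Longrightarrow> clinear g \<Longrightarrow> cbilinear (\<lambda>x y. \<beta> x (g y))"
  by (simp add: cbilinear_def clinear_def)

lemma cbilinear_sum_list:
  "(\<And>l. l \<in> set L \<Longrightarrow> cbilinear (F l)) \<Longrightarrow> cbilinear (\<lambda>x y. \<Sum>l\<leftarrow>L. F l x y)"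
  by (simp add: cbilinear_def clinear_sum_list)

lemma ctrilinearI:
  "(\<And>y z. clinear (\<lambda>x. \<gamma> x y z)) \<Longrightarrow> (\<And>x z. clinear (\<lambda>y. \<gamma> x y z))
   \<Longrightarrow> (\<And>x y. clinear (\<gamma> x y)) \<Longrightarrow> ctrilinear \<gamma>"
  by (simp add: ctrilinear_def)

lemma ctrilinear_cbilinear_12: "ctrilinear \<gamma> \<Longrightarrow> cbilinear (\<lambda>x y. \<gamma> x y z)"
  by (simp add: ctrilinear_def cbilinear_def)

lemma ctrilinear_cbilinear_23: "ctrilinear \<gamma> \<Longrightarrow> cbilinear (\<gamma> x)"
  by (simp add: ctrilinear_def cbilinear_def)

lemma ctrilinear_clinear_3: "ctrilinear \<gamma> \<Longrightarrow> clinear (\<gamma> x y)"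
  by (simp add: ctrilinear_def)

lemma cnj_sum_list: "cnj (\<Sum>x\<leftarrow>xs. f x) = (\<Sum>x\<leftarrow>xs. cnj (f x))"
  by (induction xs) auto

lemma sum_list_swap:
  "(\<Sum>x\<leftarrow>xs. \<Sum>y\<leftarrow>ys. f x y) = (\<Sum>y\<leftarrow>ys. \<Sum>x\<leftarrow>xs. (f x y :: 'c::comm_monoid_add))"
  by (induction xs) (simp_all add: sum_list_addf)

section \<open>Tensors as functionals on bilinear forms\<close>

lemma tensor_sum_list:
  assumes t: "is_tensor t" and F: "\<And>l. l \<in> set L \<Longrightarrow> cbilinear (F l)"
  shows "t (\<lambda>x y. \<Sum>l\<leftarrow>L. F l x y) = (\<Sum>l\<leftarrow>L. t (F l))"
proof -
  obtain xs where xs: "\<And>\<beta>. cbilinear \<beta> \<Longrightarrow> t \<beta> = (\<Sum>(x, y)\<leftarrow>xs. \<beta> x y)"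
    using t unfolding is_tensor_def by blast
  have "t (\<lambda>x y. \<Sum>l\<leftarrow>L. F l x y) = (\<Sum>p\<leftarrow>xs. \<Sum>l\<leftarrow>L. F l (fst p) (snd p))"
    using xs[OF cbilinear_sum_list[OF F]] by (simp add: split_def)
  also have "\<dots> = (\<Sum>l\<leftarrow>L. \<Sum>p\<leftarrow>xs. F l (fst p) (snd p))"
    by (rule sum_list_swap)
  also have "\<dots> = (\<Sum>l\<leftarrow>L. t (F l))"
    using xs F by (auto simp: split_def intro!: arg_cong[where f = sum_list] map_cong)
  finally show ?thesis .
qed

lemma tensor_clinear:
  assumes t: "is_tensor t" and B: "\<And>z. cbilinear (B z)" and L: "\<And>x y. clinear (\<lambda>z. B z x y)"
  shows "clinear (\<lambda>z. t (B z))"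
proof -
  obtain xs where xs: "\<And>\<beta>. cbilinear \<beta> \<Longrightarrow> t \<beta> = (\<Sum>(x, y)\<leftarrow>xs. \<beta> x y)"
    using t unfolding is_tensor_def by blast
  have "(\<lambda>z. t (B z)) = (\<lambda>z. \<Sum>p\<leftarrow>xs. B z (fst p) (snd p))"
    using xs B by (simp add: split_def)
  then show ?thesis
    by (simp add: clinear_sum_list L)
qed

lemma tensor_eval_swap:
  assumes a: "is_tensor a" and b: "is_tensor b"
    and F1: "\<And>p q. cbilinear (F p q)" and F2: "\<And>x y. cbilinear (\<lambda>p q. F p q x y)"
  shows "a (\<lambda>p q. b (F p q)) = b (\<lambda>x y. a (\<lambda>p q. F p q x y))"
proof -
  obtain xs where xs: "\<And>\<beta>. cbilinear \<beta> \<Longrightarrow> a \<beta> = (\<Sum>(x, y)\<leftarrow>xs. \<beta> x y)"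
    using a unfolding is_tensor_def by blast
  obtain ys where ys: "\<And>\<beta>. cbilinear \<beta> \<Longrightarrow> b \<beta> = (\<Sum>(x, y)\<leftarrow>ys. \<beta> x y)"
    using b unfolding is_tensor_def by blast
  have "a (\<lambda>p q. b (F p q)) = a (\<lambda>p q. \<Sum>l\<leftarrow>ys. F p q (fst l) (snd l))"
    using ys F1 by (simp add: split_def)
  also have "\<dots> = (\<Sum>k\<leftarrow>xs. \<Sum>l\<leftarrow>ys. F (fst k) (snd k) (fst l) (snd l))"
    by (subst xs) (auto intro!: cbilinear_sum_list F2 simp: split_def)
  also have "\<dots> = (\<Sum>l\<leftarrow>ys. \<Sum>k\<leftarrow>xs. F (fst k) (snd k) (fst l) (snd l))"
    by (rule sum_list_swap)
  also have "\<dots> = b (\<lambda>x y. \<Sum>k\<leftarrow>xs. F (fst k) (snd k) x y)"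
    by (subst ys) (auto intro!: cbilinear_sum_list F1 simp: split_def)
  also have "\<dots> = b (\<lambda>x y. a (\<lambda>p q. F p q x y))"
    using xs F2 by (simp add: split_def)
  finally show ?thesis .
qed

lemma tlinear_clinear: "tlinear d \<Longrightarrow> cbilinear \<beta> \<Longrightarrow> clinear (\<lambda>v. d v \<beta>)"
  by (simp add: tlinear_def clinear_def cscale_complex_def)

lemma tlinear_is_tensor: "tlinear d \<Longrightarrow> is_tensor (d v)"
  by (simp add: tlinear_def)

definition tens_pullback ::
  "(('v \<Rightarrow> 'w \<Rightarrow> complex) \<Rightarrow> ('x \<Rightarrow> 'y \<Rightarrow> complex)) \<Rightarrow> ('x, 'y) tens \<Rightarrow> ('v, 'w) tens" where
  "tens_pullback G t = (\<lambda>\<beta>. t (G \<beta>))"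

lemma teq_tens_pullback:
  assumes "\<And>\<beta>. cbilinear \<beta> \<Longrightarrow> cbilinear (G \<beta>)" and "teq t s"
  shows "teq (tens_pullback G t) (tens_pullback G s)"
  using assms by (simp add: teq_def tens_pullback_def)

lemma tens_pullback_inverse:
  assumes "\<And>\<beta>. cbilinear \<beta> \<Longrightarrow> G (G' \<beta>) = \<beta>"
  shows "teq (tens_pullback G' (tens_pullback G t)) t"
  using assms by (simp add: teq_def tens_pullback_def)

lemma tens_pullback_teq_cancel:
  fixes G :: "('v::cvec \<Rightarrow> 'w::cvec \<Rightarrow> complex) \<Rightarrow> ('x::cvec \<Rightarrow> 'y::cvec \<Rightarrow> complex)"
  assumes "\<And>\<beta>. cbilinear \<beta> \<Longrightarrow> cbilinear (G' \<beta>)" and "\<And>\<beta>. cbilinear \<beta> \<Longrightarrow> G (G' \<beta>) = \<beta>"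
    and "teq (tens_pullback G t) (tens_pullback G s)"
  shows "teq t s"
proof (unfold teq_def, intro allI impI)
  fix \<beta> :: "'x \<Rightarrow> 'y \<Rightarrow> complex"
  assume "cbilinear \<beta>"
  then have "t (G (G' \<beta>)) = s (G (G' \<beta>))"
    using assms(1,3) by (simp add: teq_def tens_pullback_def)
  then show "t \<beta> = s \<beta>"
    using assms(2) \<open>cbilinear \<beta>\<close> by simp
qed

lemma unitary_iso_tens_pullbackI:
  fixes G G' :: "('v::cvec \<Rightarrow> 'w::cvec \<Rightarrow> complex) \<Rightarrow> ('v \<Rightarrow> 'w \<Rightarrow> complex)"
  assumes bilinear: "\<And>\<beta>. cbilinear \<beta> \<Longrightarrow> cbilinear (G \<beta>)" "\<And>\<beta>. cbilinear \<beta> \<Longrightarrow> cbilinear (G' \<beta>)"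
    and inverse: "\<And>\<beta>. cbilinear \<beta> \<Longrightarrow> G (G' \<beta>) = \<beta>" "\<And>\<beta>. cbilinear \<beta> \<Longrightarrow> G' (G \<beta>) = \<beta>"
    and tensor: "\<And>t. is_tensor t \<Longrightarrow> is_tensor (tens_pullback G t)"
      "\<And>t. is_tensor t \<Longrightarrow> is_tensor (tens_pullback G' t)"
    and isometric: "\<And>t s. is_tensor t \<Longrightarrow> is_tensor s \<Longrightarrow>
      ip (tens_pullback G t) (tens_pullback G s) = ip t s"
    and linear: "\<And>b t. is_tensor t \<Longrightarrow> teq (tens_pullback G (act1 b t)) (act2 b (tens_pullback G t))"
    and colinear: "\<And>t. is_tensor t \<Longrightarrow> teq3 (coact2 (tens_pullback G t))
      (\<lambda>\<gamma>. coact1 t (\<lambda>v w c. tens_pullback G (tens v w) (\<lambda>v' w'. \<gamma> v' w' c)))"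
  shows "unitary_iso ip act1 coact1 act2 coact2 (tens_pullback G)"
  unfolding unitary_iso_def
proof (intro conjI allI impI)
  fix t s :: "('v, 'w) tens"
  show "teq (tens_pullback G (tadd t s)) (tadd (tens_pullback G t) (tens_pullback G s))"
    and "teq (tens_pullback G (tscale c t)) (tscale c (tens_pullback G t))" for c
    by (simp_all add: teq_def tadd_def tscale_def tens_pullback_def)
  show "teq t s \<Longrightarrow> teq (tens_pullback G t) (tens_pullback G s)"
    by (rule teq_tens_pullback[OF bilinear(1)])
  show "teq (tens_pullback G t) (tens_pullback G s) \<Longrightarrow> teq t s"
    by (rule tens_pullback_teq_cancel[where G = G and G' = G', OF bilinear(2) inverse(1)])
  have "teq (tens_pullback G (tens_pullback G' s)) s"
    by (rule tens_pullback_inverse[where G = G' and G' = G, OF inverse(2)])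
  then show "\<exists>t. is_tensor t \<and> teq (tens_pullback G t) s" if "is_tensor s"
    using tensor(2)[OF that] by blast
qed (simp_all add: tensor(1) isometric linear colinear)

lemma alg_module_clinear_left: "alg_module act \<Longrightarrow> clinear (\<lambda>x. act x v)"
  by (simp add: alg_module_def clinear_def)

lemma alg_module_clinear_right: "alg_module act \<Longrightarrow> clinear (act x)"
  by (simp add: alg_module_def clinear_def)

lemma alg_module_one: "alg_module act \<Longrightarrow> act 1 v = v"
  by (simp add: alg_module_def)

lemma alg_module_mult: "alg_module act \<Longrightarrow> act (x * y) v = act x (act y v)"
  by (simp add: alg_module_def)

lemma comodule_tlinear: "comodule \<Delta>Y \<epsilon>Y \<delta> \<Longrightarrow> tlinear \<delta>"
  by (simp add: comodule_def)

lemma comodule_is_tensor: "comodule \<Delta>Y \<epsilon>Y \<delta> \<Longrightarrow> is_tensor (\<delta> v)"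
  by (simp add: comodule_def tlinear_is_tensor)

lemma comodule_coassoc:
  "comodule \<Delta>Y \<epsilon>Y \<delta> \<Longrightarrow> ctrilinear \<gamma> \<Longrightarrow>
     \<delta> v (\<lambda>v0 v1. \<delta> v0 (\<lambda>p q. \<gamma> p q v1)) = \<delta> v (\<lambda>v0 v1. \<Delta>Y v1 (\<lambda>p q. \<gamma> v0 p q))"
  by (simp add: comodule_def)

lemma comodule_counit:
  "comodule \<Delta>Y \<epsilon>Y \<delta> \<Longrightarrow> clinear \<psi> \<Longrightarrow> \<delta> v (\<lambda>v0 v1. \<psi> v0 * \<epsilon>Y v1) = \<psi> v"
  by (simp add: comodule_def)

lemma pre_hilbert_clinear:
  assumes "pre_hilbert ip"
  shows "clinear (ip x)"
proof -
  have "ip x (y + z) = ip x y + ip x z" and "ip x (cscale c y) = c * ip x y" for y z c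
    using assms unfolding pre_hilbert_def by blast+
  then show ?thesis
    by (simp add: clinear_def cscale_complex_def)
qed

lemma pre_hilbert_cnj:
  assumes "pre_hilbert ip"
  shows "cnj (ip x y) = ip y x"
proof -
  have "ip y x = cnj (ip x y)"
    using assms unfolding pre_hilbert_def by blast
  then show ?thesis
    by simp
qed

lemma cbilinear_ip_product:
  assumes "pre_hilbert ipV" and "pre_hilbert ipW"
  shows "cbilinear (\<lambda>v' w'. ipV v v' * ipW w w')"
  using pre_hilbert_clinear[OF assms(1)] pre_hilbert_clinear[OF assms(2)]
  by (simp add: cbilinear_def clinear_def cscale_complex_def algebra_simps)

lemma rep_compat_adjoint_act:
  "rep_compat stX dagY ip act \<delta> \<Longrightarrow> ip v (act x w) = ip (act (stX x) v) w"
  by (simp add: rep_compat_def)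

lemma rep_compat_coact:
  "rep_compat stX dagY ip act \<delta> \<Longrightarrow> clinear \<psi> \<Longrightarrow>
     \<delta> w (\<lambda>w0 w1. ip v w0 * \<psi> w1) = cnj (\<delta> v (\<lambda>v0 v1. cnj (ip v0 w * \<psi> (dagY v1))))"
  by (simp add: rep_compat_def)

lemma hopf_clinear_antipode: "hopf_star_algebra \<Delta> \<epsilon> S st \<Longrightarrow> clinear S"
  by (simp add: hopf_star_algebra_def)

lemma hopf_star_involutive: "hopf_star_algebra \<Delta> \<epsilon> S st \<Longrightarrow> st (st x) = x"
  by (simp add: hopf_star_algebra_def star_involution_def)

lemma alg_module_antipode_left:
  assumes "hopf_star_algebra \<Delta> \<epsilon> S st" "alg_module act" "clinear \<psi>"
  shows "\<Delta> x (\<lambda>x1 x2. \<psi> (act (S x1) (act x2 w))) = \<epsilon> x * \<psi> w"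
proof -
  have "clinear (\<lambda>a. \<psi> (act a w))"
    by (rule clinear_compose[OF assms(3) alg_module_clinear_left[OF assms(2)]])
  then have "\<Delta> x (\<lambda>x1 x2. \<psi> (act (S x1 * x2) w)) = \<epsilon> x * \<psi> (act 1 w)"
    using assms(1) unfolding hopf_star_algebra_def by blast
  then show ?thesis
    using assms(2) by (simp add: alg_module_mult alg_module_one)
qed

lemma alg_module_antipode_right:
  assumes "hopf_star_algebra \<Delta> \<epsilon> S st" "alg_module act" "clinear \<psi>"
  shows "\<Delta> x (\<lambda>x1 x2. \<psi> (act x1 (act (S x2) w))) = \<epsilon> x * \<psi> w"
proof -
  have "clinear (\<lambda>a. \<psi> (act a w))"
    by (rule clinear_compose[OF assms(3) alg_module_clinear_left[OF assms(2)]])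
  then have "\<Delta> x (\<lambda>x1 x2. \<psi> (act (x1 * S x2) w)) = \<epsilon> x * \<psi> (act 1 w)"
    using assms(1) unfolding hopf_star_algebra_def by blast
  then show ?thesis
    using assms(2) by (simp add: alg_module_mult alg_module_one)
qed

lemma alg_module_antipode_clinear:
  "hopf_star_algebra \<Delta> \<epsilon> S st \<Longrightarrow> alg_module act \<Longrightarrow> clinear (\<lambda>a. act (S a) w)"
  by (rule clinear_compose[OF alg_module_clinear_left hopf_clinear_antipode])

lemma quotient_coalgebra_act_clinear:
  assumes "quotient_coalgebra \<Delta> \<epsilon> S st \<iota> \<pi> \<Delta>C \<epsilon>C actC dagC"
  shows "clinear (\<lambda>a. actC a c)" and "clinear (actC a)"
proof -
  have \<pi>: "clinear \<pi>" "surj \<pi>" and act: "\<And>a x. actC a (\<pi> x) = \<pi> (a * x)"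
    using assms by (simp_all add: quotient_coalgebra_def)
  obtain x where "c = \<pi> x"
    using \<pi>(2) by (metis surjD)
  then show "clinear (\<lambda>a. actC a c)"
    using \<pi>(1) by (simp add: act clinear_def distrib_right flip: cscale_mult_left)
  show "clinear (actC a)"
  proof (unfold clinear_def, intro conjI allI)
    fix c1 c2
    obtain x1 x2 where "c1 = \<pi> x1" "c2 = \<pi> x2"
      using \<pi>(2) by (metis surjD)
    moreover have "c1 + c2 = \<pi> (x1 + x2)" and "\<pi> (a * x1 + a * x2) = \<pi> (a * x1) + \<pi> (a * x2)"
      using \<pi>(1) \<open>c1 = \<pi> x1\<close> \<open>c2 = \<pi> x2\<close> by (simp_all add: clinear_def)
    ultimately show "actC a (c1 + c2) = actC a c1 + actC a c2"
      by (simp add: act distrib_left)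
  next
    fix k c'
    obtain x where "c' = \<pi> x"
      using \<pi>(2) by (metis surjD)
    moreover have "cscale k c' = \<pi> (cscale k x)" and "\<pi> (cscale k (a * x)) = cscale k (\<pi> (a * x))"
      using \<pi>(1) \<open>c' = \<pi> x\<close> by (simp_all add: clinear_def)
    ultimately show "actC a (cscale k c') = cscale k (actC a c')"
      by (simp add: act flip: cscale_mult_right)
  qed
qed

section \<open>Twisting by a coaction\<close>

text \<open>tens_pullback (twist_form \<delta> h) is the map v \<otimes> w \<mapsto> v_(0) \<otimes> h v_(1) w.\<close>

definition twist_form ::
  "('v \<Rightarrow> ('v, 'a) tens) \<Rightarrow> ('a \<Rightarrow> 'w \<Rightarrow> 'u) \<Rightarrow> ('v \<Rightarrow> 'u \<Rightarrow> complex) \<Rightarrow> 'v \<Rightarrow> 'w \<Rightarrow> complex" where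
  "twist_form \<delta> h \<beta> v w = \<delta> v (\<lambda>v0 v1. \<beta> v0 (h v1 w))"

lemma cbilinear_twist_form:
  assumes \<delta>: "tlinear \<delta>" and \<beta>: "cbilinear \<beta>"
    and h: "\<And>w. clinear (\<lambda>a. h a w)" "\<And>a. clinear (h a)"
  shows "cbilinear (twist_form \<delta> h \<beta>)"
proof (rule cbilinearI)
  have inner: "cbilinear (\<lambda>v0 v1. \<beta> v0 (h v1 w))" for w
    using \<beta> h(1) by (rule cbilinear_compose_right)
  show "clinear (\<lambda>v. twist_form \<delta> h \<beta> v w)" for w
    unfolding twist_form_def using \<delta> inner by (rule tlinear_clinear)
  show "clinear (twist_form \<delta> h \<beta> v)" for v
    unfolding twist_form_def
    by (rule tensor_clinear[OF tlinear_is_tensor[OF \<delta>] inner])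
      (rule clinear_compose[OF cbilinear_clinear_right[OF \<beta>] h(2)])
qed

lemma twist_form_clinear_param:
  assumes \<delta>: "tlinear \<delta>" and h: "\<And>w. clinear (\<lambda>a. h a w)"
    and B: "\<And>z. cbilinear (B z)" "\<And>x y. clinear (\<lambda>z. B z x y)"
  shows "clinear (\<lambda>z. twist_form \<delta> h (B z) v w)"
  unfolding twist_form_def
  by (rule tensor_clinear[OF tlinear_is_tensor[OF \<delta>] cbilinear_compose_right[OF B(1) h] B(2)])

lemma is_tensor_tens_pullback_twist_form:
  assumes \<delta>: "tlinear \<delta>" and t: "is_tensor t"
    and h: "\<And>w. clinear (\<lambda>a. h a w)" "\<And>a. clinear (h a)"
  shows "is_tensor (tens_pullback (twist_form \<delta> h) t)"
proof -
  obtain xs where xs: "\<And>\<beta>. cbilinear \<beta> \<Longrightarrow> t \<beta> = (\<Sum>(x, y)\<leftarrow>xs. \<beta> x y)"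
    using t unfolding is_tensor_def by blast
  have "\<forall>v. \<exists>ys. \<forall>\<beta>. cbilinear \<beta> \<longrightarrow> \<delta> v \<beta> = (\<Sum>(x, y)\<leftarrow>ys. \<beta> x y)"
    using \<delta> by (simp add: tlinear_def is_tensor_def)
  then obtain L where L: "\<And>v \<beta>. cbilinear \<beta> \<Longrightarrow> \<delta> v \<beta> = (\<Sum>(x, y)\<leftarrow>L v. \<beta> x y)"
    by (auto dest!: choice)
  define zs where "zs = concat (map (\<lambda>(x, y). map (\<lambda>(p, q). (p, h q y)) (L x)) xs)"
  have "tens_pullback (twist_form \<delta> h) t \<beta> = (\<Sum>(p, q)\<leftarrow>zs. \<beta> p q)" if \<beta>: "cbilinear \<beta>" for \<beta>
  proof -
    have "tens_pullback (twist_form \<delta> h) t \<beta> = (\<Sum>(x, y)\<leftarrow>xs. \<delta> x (\<lambda>v0 v1. \<beta> v0 (h v1 y)))"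
      unfolding tens_pullback_def using xs[OF cbilinear_twist_form[OF \<delta> \<beta> h]]
      by (simp add: twist_form_def)
    also have "\<dots> = (\<Sum>(x, y)\<leftarrow>xs. \<Sum>(p, q)\<leftarrow>L x. \<beta> p (h q y))"
      using L[OF cbilinear_compose_right[OF \<beta> h(1)]] by simp
    also have "\<dots> = (\<Sum>(p, q)\<leftarrow>zs. \<beta> p q)"
      unfolding zs_def by (induction xs) (simp_all add: split_def o_def)
    finally show ?thesis .
  qed
  then show ?thesis
    unfolding is_tensor_def by blast
qed

lemma twist_form_sum_list:
  assumes \<delta>: "tlinear \<delta>" and h: "\<And>w. clinear (\<lambda>a. h a w)"
    and F: "\<And>l. l \<in> set L \<Longrightarrow> cbilinear (F l)"
  shows "twist_form \<delta> h (\<lambda>x y. \<Sum>l\<leftarrow>L. F l x y) v w = (\<Sum>l\<leftarrow>L. twist_form \<delta> h (F l) v w)"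
  unfolding twist_form_def
  by (rule tensor_sum_list[OF tlinear_is_tensor[OF \<delta>]]) (rule cbilinear_compose_right[OF F h])

text \<open>The hypothesis says that h' is a convolution inverse of h.\<close>

lemma twist_form_inverse:
  assumes \<delta>: "comodule \<Delta> \<epsilon> \<delta>" and \<beta>: "cbilinear \<beta>"
    and h: "\<And>w. clinear (\<lambda>a. h a w)" "\<And>a. clinear (h a)"
    and h': "\<And>u. clinear (\<lambda>a. h' a u)" "\<And>a. clinear (h' a)"
    and inverse: "\<And>x w \<psi>. clinear \<psi> \<Longrightarrow> \<Delta> x (\<lambda>x1 x2. \<psi> (h' x1 (h x2 w))) = \<epsilon> x * \<psi> w"
  shows "twist_form \<delta> h (twist_form \<delta> h' \<beta>) = \<beta>"
proof (intro ext)
  fix v w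
  have "ctrilinear (\<lambda>p q r. \<beta> p (h' q (h r w)))"
  proof (rule ctrilinearI)
    show "clinear (\<lambda>p. \<beta> p (h' q (h r w)))" for q r
      by (rule cbilinear_clinear_left[OF \<beta>])
    show "clinear (\<lambda>q. \<beta> p (h' q (h r w)))" for p r
      by (rule clinear_compose[OF cbilinear_clinear_right[OF \<beta>] h'(1)])
    show "clinear (\<lambda>r. \<beta> p (h' q (h r w)))" for p q
      by (intro clinear_compose[OF cbilinear_clinear_right[OF \<beta>]] clinear_compose[OF h'(2) h(1)])
  qed
  then have "twist_form \<delta> h (twist_form \<delta> h' \<beta>) v w
      = \<delta> v (\<lambda>v0 v1. \<Delta> v1 (\<lambda>p q. \<beta> v0 (h' p (h q w))))"
    unfolding twist_form_def by (rule comodule_coassoc[OF \<delta>])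
  also have "\<dots> = \<delta> v (\<lambda>v0 v1. \<beta> v0 w * \<epsilon> v1)"
    by (simp add: inverse[OF cbilinear_clinear_right[OF \<beta>]] mult.commute)
  also have "\<dots> = \<beta> v w"
    by (rule comodule_counit[OF \<delta> cbilinear_clinear_left[OF \<beta>]])
  finally show "twist_form \<delta> h (twist_form \<delta> h' \<beta>) v w = \<beta> v w" .
qed

lemma twist_form_antipode_inverse:
  assumes hopf: "hopf_star_algebra \<Delta> \<epsilon> S st" and \<delta>: "comodule \<Delta> \<epsilon> \<delta>"
    and act: "alg_module act" and \<beta>: "cbilinear \<beta>"
  shows "twist_form \<delta> act (twist_form \<delta> (\<lambda>a. act (S a)) \<beta>) = \<beta>"
    and "twist_form \<delta> (\<lambda>a. act (S a)) (twist_form \<delta> act \<beta>) = \<beta>"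
proof -
  note act_lin = alg_module_clinear_left[OF act] alg_module_clinear_right[OF act]
  note act_S_lin = alg_module_antipode_clinear[OF hopf act] act_lin(2)
  show "twist_form \<delta> act (twist_form \<delta> (\<lambda>a. act (S a)) \<beta>) = \<beta>"
    by (rule twist_form_inverse[OF \<delta> \<beta> act_lin act_S_lin])
      (rule alg_module_antipode_left[OF hopf act])
  show "twist_form \<delta> (\<lambda>a. act (S a)) (twist_form \<delta> act \<beta>) = \<beta>"
    by (rule twist_form_inverse[OF \<delta> \<beta> act_S_lin act_lin])
      (rule alg_module_antipode_right[OF hopf act])
qed

lemma unitary_iso_tens_pullback_twist_form:
  assumes hopf: "hopf_star_algebra \<Delta> \<epsilon> S st" and \<delta>: "comodule \<Delta> \<epsilon> \<delta>" and act: "alg_module act"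
    and isometric: "\<And>t s. is_tensor t \<Longrightarrow> is_tensor s \<Longrightarrow>
      ip (tens_pullback (twist_form \<delta> act) t) (tens_pullback (twist_form \<delta> act) s) = ip t s"
    and linear: "\<And>b t. is_tensor t \<Longrightarrow>
      teq (tens_pullback (twist_form \<delta> act) (act1 b t)) (act2 b (tens_pullback (twist_form \<delta> act) t))"
    and colinear: "\<And>t. is_tensor t \<Longrightarrow> teq3 (coact2 (tens_pullback (twist_form \<delta> act) t))
      (\<lambda>\<gamma>. coact1 t (\<lambda>v w c. tens_pullback (twist_form \<delta> act) (tens v w) (\<lambda>v' w'. \<gamma> v' w' c)))"
  shows "unitary_iso ip act1 coact1 act2 coact2 (tens_pullback (twist_form \<delta> act))"
proof (rule unitary_iso_tens_pullbackI[where G' = "twist_form \<delta> (\<lambda>a. act (S a))"])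
  note tl = comodule_tlinear[OF \<delta>]
  note act_lin = alg_module_clinear_left[OF act] alg_module_clinear_right[OF act]
  note act_S_lin = alg_module_antipode_clinear[OF hopf act] act_lin(2)
  show "cbilinear (twist_form \<delta> act \<beta>)" "cbilinear (twist_form \<delta> (\<lambda>a. act (S a)) \<beta>)"
    and "twist_form \<delta> act (twist_form \<delta> (\<lambda>a. act (S a)) \<beta>) = \<beta>"
    and "twist_form \<delta> (\<lambda>a. act (S a)) (twist_form \<delta> act \<beta>) = \<beta>"
    if "cbilinear \<beta>" for \<beta>
    using cbilinear_twist_form[OF tl that act_lin] cbilinear_twist_form[OF tl that act_S_lin]
      twist_form_antipode_inverse[OF hopf \<delta> act that] by simp_all
  show "is_tensor (tens_pullback (twist_form \<delta> act) t)"
    and "is_tensor (tens_pullback (twist_form \<delta> (\<lambda>a. act (S a))) t)" if "is_tensor t" for t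
    using is_tensor_tens_pullback_twist_form[OF tl that act_lin]
      is_tensor_tens_pullback_twist_form[OF tl that act_S_lin] by simp_all
qed (fact isometric linear colinear)+

section \<open>The twist is isometric and equivariant\<close>

text \<open>On elementary tensors: the adjoint of v \<otimes> w \<mapsto> v_(0) \<otimes> v_(1) w is
  v \<otimes> w \<mapsto> v_(0) \<otimes> S(v_(1)) w.\<close>

lemma twist_form_ip_adjoint:
  assumes hopf: "hopf_star_algebra \<Delta> \<epsilon> S st"
    and V: "pre_hilbert ipV" "rep_compat stB (\<lambda>a. st (S a)) ipV actV \<delta>V"
    and W: "pre_hilbert ipW" "alg_module actW" "rep_compat st dagC ipW actW \<delta>W"
  shows "cnj (twist_form \<delta>V actW (\<lambda>v' w'. ipV v v' * ipW w w') x y)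
       = twist_form \<delta>V (\<lambda>a. actW (S a)) (\<lambda>v' w'. ipV x v' * ipW y w') v w"
proof -
  have "clinear (\<lambda>q. ipW w (actW q y))"
    by (rule clinear_compose[OF pre_hilbert_clinear[OF W(1)] alg_module_clinear_left[OF W(2)]])
  then have "\<delta>V x (\<lambda>p q. ipV v p * ipW w (actW q y))
      = cnj (\<delta>V v (\<lambda>p q. cnj (ipV p x * ipW w (actW (st (S q)) y))))"
    by (rule rep_compat_coact[OF V(2)])
  moreover have "cnj (ipV p x * ipW w (actW (st (S q)) y)) = ipV x p * ipW y (actW (S q) w)"
    for p q
  proof -
    have "ipW w (actW (st (S q)) y) = ipW (actW (S q) w) y"
      by (simp add: rep_compat_adjoint_act[OF W(3)] hopf_star_involutive[OF hopf])
    then show ?thesis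
      by (simp add: pre_hilbert_cnj[OF V(1)] pre_hilbert_cnj[OF W(1)])
  qed
  ultimately show ?thesis
    unfolding twist_form_def by simp
qed

lemma tens_ip_tens_pullback_twist_form:
  assumes hopf: "hopf_star_algebra \<Delta> \<epsilon> S st"
    and V: "pre_hilbert ipV" "comodule \<Delta> \<epsilon> \<delta>V" "rep_compat stB (\<lambda>a. st (S a)) ipV actV \<delta>V"
    and W: "pre_hilbert ipW" "alg_module actW" "rep_compat st dagC ipW actW \<delta>W"
    and s: "is_tensor s"
  shows "tens_ip ipV ipW (tens_pullback (twist_form \<delta>V actW) t) (tens_pullback (twist_form \<delta>V actW) s)
       = tens_ip ipV ipW t s"
proof -
  define ip where "ip v w = (\<lambda>v' w'. ipV v v' * ipW w w')" for v w
  define G where "G = twist_form \<delta>V actW"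
  define G' where "G' = twist_form \<delta>V (\<lambda>a. actW (S a))"
  obtain xs where xs: "\<And>\<beta>. cbilinear \<beta> \<Longrightarrow> s \<beta> = (\<Sum>(x, y)\<leftarrow>xs. \<beta> x y)"
    using s unfolding is_tensor_def by blast
  have ip: "cbilinear (ip v w)" for v w
    unfolding ip_def using V(1) W(1) by (rule cbilinear_ip_product)
  have \<delta>V: "tlinear \<delta>V"
    using V(2) by (rule comodule_tlinear)
  note actW = alg_module_clinear_left[OF W(2)] alg_module_clinear_right[OF W(2)]
  have G'_ip: "cbilinear (G' (ip v w))" for v w
    unfolding G'_def using \<delta>V ip alg_module_antipode_clinear[OF hopf W(2)] actW(2)
    by (rule cbilinear_twist_form)
  have adjoint: "cnj (s (G (ip v0 w0))) = (\<Sum>p\<leftarrow>xs. G' (ip (fst p) (snd p)) v0 w0)" for v0 w0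
    using xs[OF cbilinear_twist_form[OF \<delta>V ip actW]]
      twist_form_ip_adjoint[OF hopf V(1,3) W, of v0 w0]
    by (simp add: G_def G'_def ip_def cnj_sum_list split_def)
  have "G (\<lambda>v0 w0. cnj (s (G (ip v0 w0)))) v w = cnj (s (ip v w))" for v w
  proof -
    have "G (\<lambda>v0 w0. cnj (s (G (ip v0 w0)))) v w
        = G (\<lambda>v0 w0. \<Sum>p\<leftarrow>xs. G' (ip (fst p) (snd p)) v0 w0) v w"
      by (simp add: adjoint)
    also have "\<dots> = (\<Sum>p\<leftarrow>xs. G (G' (ip (fst p) (snd p))) v w)"
      unfolding G_def by (rule twist_form_sum_list[OF \<delta>V actW(1) G'_ip])
    also have "\<dots> = (\<Sum>p\<leftarrow>xs. ip (fst p) (snd p) v w)"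
      unfolding G_def G'_def by (simp add: twist_form_antipode_inverse[OF hopf V(2) W(2) ip])
    also have "\<dots> = cnj (s (ip v w))"
      by (simp add: xs[OF ip, unfolded ip_def] ip_def cnj_sum_list split_def
          pre_hilbert_cnj[OF V(1)] pre_hilbert_cnj[OF W(1)])
    finally show ?thesis .
  qed
  then have "G (\<lambda>v0 w0. cnj (s (G (ip v0 w0)))) = (\<lambda>v w. cnj (s (ip v w)))"
    by (intro ext)
  then show ?thesis
    by (simp add: tens_ip_def tens_pullback_def G_def ip_def)
qed

lemma twist_form_act:
  assumes actW: "alg_module actW" and compat: "mod_comod_compat \<delta>B (\<lambda>a y. a * y) actV \<delta>V"
    and \<beta>: "cbilinear \<beta>"
  shows "twist_form \<delta>V actW \<beta> (actV b v) w
       = \<delta>B b (\<lambda>b1 b2. twist_form \<delta>V actW (\<lambda>x z. \<beta> (actV b1 x) (actW b2 z)) v w)"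
proof -
  have "cbilinear (\<lambda>v0 a. \<beta> v0 (actW a w))"
    by (rule cbilinear_compose_right[OF \<beta> alg_module_clinear_left[OF actW]])
  then have "\<delta>V (actV b v) (\<lambda>v0 a. \<beta> v0 (actW a w))
      = \<delta>B b (\<lambda>b1 b2. \<delta>V v (\<lambda>v0 v1. \<beta> (actV b1 v0) (actW (b2 * v1) w)))"
    using compat unfolding mod_comod_compat_def by blast
  then show ?thesis
    by (simp add: twist_form_def alg_module_mult[OF actW])
qed

lemma tens_pullback_twist_form_indL_act:
  fixes t :: "('v::cvec, 'w::cvec) tens"
  assumes \<delta>V: "comodule \<Delta> \<epsilon> \<delta>V" and actV: "alg_module actV" and actW: "alg_module actW"
    and compat: "mod_comod_compat \<delta>B (\<lambda>a y. a * y) actV \<delta>V"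
    and \<delta>B: "is_tensor (\<delta>B b)" and t: "is_tensor t"
  shows "teq (tens_pullback (twist_form \<delta>V actW) (indL_act actV b t))
             (indR_act \<delta>B actV actW b (tens_pullback (twist_form \<delta>V actW) t))"
proof (unfold teq_def, intro allI impI)
  fix \<beta> :: "'v \<Rightarrow> 'w \<Rightarrow> complex"
  assume \<beta>: "cbilinear \<beta>"
  define F where "F b1 b2 = twist_form \<delta>V actW (\<lambda>x z. \<beta> (actV b1 x) (actW b2 z))" for b1 b2
  note tl = comodule_tlinear[OF \<delta>V]
  note actW_lin = alg_module_clinear_left[OF actW] alg_module_clinear_right[OF actW]
  have \<beta>_act: "cbilinear (\<lambda>x z. \<beta> (actV b1 x) (actW b2 z))" for b1 b2
    by (rule cbilinear_compose[OF \<beta> alg_module_clinear_right[OF actV] actW_lin(2)])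
  have F1: "cbilinear (F b1 b2)" for b1 b2
    unfolding F_def by (rule cbilinear_twist_form[OF tl \<beta>_act actW_lin])
  have F2: "cbilinear (\<lambda>b1 b2. F b1 b2 v w)" for v w
  proof (rule cbilinearI)
    show "clinear (\<lambda>b1. F b1 b2 v w)" for b2
      unfolding F_def using tl actW_lin(1) \<beta>_act
      by (rule twist_form_clinear_param)
        (rule clinear_compose[OF cbilinear_clinear_left[OF \<beta>] alg_module_clinear_left[OF actV]])
    show "clinear (\<lambda>b2. F b1 b2 v w)" for b1
      unfolding F_def using tl actW_lin(1) \<beta>_act
      by (rule twist_form_clinear_param)
        (rule clinear_compose[OF cbilinear_clinear_right[OF \<beta>] actW_lin(1)])
  qed
  have "tens_pullback (twist_form \<delta>V actW) (indL_act actV b t) \<beta>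
      = t (\<lambda>v w. \<delta>B b (\<lambda>b1 b2. F b1 b2 v w))"
    unfolding tens_pullback_def indL_act_def F_def
    by (intro arg_cong[where f = t] ext) (rule twist_form_act[OF actW compat \<beta>])
  also have "\<dots> = \<delta>B b (\<lambda>b1 b2. t (F b1 b2))"
    by (rule tensor_eval_swap[OF \<delta>B t F1 F2, symmetric])
  also have "\<dots> = indR_act \<delta>B actV actW b (tens_pullback (twist_form \<delta>V actW) t) \<beta>"
    by (simp add: indR_act_def tens_pullback_def F_def)
  finally show "tens_pullback (twist_form \<delta>V actW) (indL_act actV b t) \<beta>
      = indR_act \<delta>B actV actW b (tens_pullback (twist_form \<delta>V actW) t) \<beta>" .
qed

text \<open>The proof uses (v_(1) w)_(0) \<otimes> (v_(1) w)_(1) = v_(1) w_(0) \<otimes> v_(2) w_(1), then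
  coassociativity of the coaction of V, then exchanges the two finite sums.\<close>

lemma twist_form_coact:
  assumes \<delta>V: "comodule \<Delta> \<epsilon> \<delta>V" and \<delta>W: "comodule \<Delta>C \<epsilon>C \<delta>W" and actW: "alg_module actW"
    and compat: "mod_comod_compat \<Delta> actC actW \<delta>W"
    and actC: "\<And>c. clinear (\<lambda>a. actC a c)" "\<And>a. clinear (actC a)" and \<gamma>: "ctrilinear \<gamma>"
  shows "twist_form \<delta>V actW (\<lambda>v0 w0. \<delta>W w0 (\<gamma> v0)) v w
       = \<delta>V v (\<lambda>v0 v1. \<delta>W w (\<lambda>w0 w1. twist_form \<delta>V actW (\<lambda>p q. \<gamma> p q (actC v1 w1)) v0 w0))"
proof -
  note actW_lin = alg_module_clinear_left[OF actW] alg_module_clinear_right[OF actW]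
  have \<gamma>_act: "cbilinear (\<lambda>w0 w1. \<gamma> x (actW a1 w0) (actC a2 w1))" for x a1 a2
    by (rule cbilinear_compose[OF ctrilinear_cbilinear_23[OF \<gamma>] actW_lin(2) actC(2)])
  have \<gamma>_act': "cbilinear (\<lambda>p q. \<gamma> p (actW q w0) c)" for w0 c
    by (rule cbilinear_compose_right[OF ctrilinear_cbilinear_12[OF \<gamma>] actW_lin(1)])
  have "ctrilinear (\<lambda>x a1 a2. \<delta>W w (\<lambda>w0 w1. \<gamma> x (actW a1 w0) (actC a2 w1)))"
  proof (rule ctrilinearI)
    show "clinear (\<lambda>x. \<delta>W w (\<lambda>w0 w1. \<gamma> x (actW a1 w0) (actC a2 w1)))" for a1 a2
      by (rule tensor_clinear[OF comodule_is_tensor[OF \<delta>W] \<gamma>_act])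
        (rule cbilinear_clinear_left[OF ctrilinear_cbilinear_12[OF \<gamma>]])
    show "clinear (\<lambda>a1. \<delta>W w (\<lambda>w0 w1. \<gamma> x (actW a1 w0) (actC a2 w1)))" for x a2
      by (rule tensor_clinear[OF comodule_is_tensor[OF \<delta>W] \<gamma>_act])
        (rule clinear_compose[OF cbilinear_clinear_right[OF ctrilinear_cbilinear_12[OF \<gamma>]] actW_lin(1)])
    show "clinear (\<lambda>a2. \<delta>W w (\<lambda>w0 w1. \<gamma> x (actW a1 w0) (actC a2 w1)))" for x a1
      by (rule tensor_clinear[OF comodule_is_tensor[OF \<delta>W] \<gamma>_act])
        (rule clinear_compose[OF ctrilinear_clinear_3[OF \<gamma>] actC(1)])
  qed
  note coassoc = comodule_coassoc[OF \<delta>V this]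
  have "\<delta>W (actW v1 w) (\<gamma> v0) = \<Delta> v1 (\<lambda>a1 a2. \<delta>W w (\<lambda>w0 w1. \<gamma> v0 (actW a1 w0) (actC a2 w1)))"
    for v0 v1
    using compat ctrilinear_cbilinear_23[OF \<gamma>] unfolding mod_comod_compat_def by blast
  then have "twist_form \<delta>V actW (\<lambda>v0 w0. \<delta>W w0 (\<gamma> v0)) v w
      = \<delta>V v (\<lambda>v0 v1. \<delta>V v0 (\<lambda>p q. \<delta>W w (\<lambda>w0 w1. \<gamma> p (actW q w0) (actC v1 w1))))"
    by (simp add: twist_form_def coassoc)
  also have "\<dots> = \<delta>V v (\<lambda>v0 v1. \<delta>W w (\<lambda>w0 w1. \<delta>V v0 (\<lambda>p q. \<gamma> p (actW q w0) (actC v1 w1))))"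
    by (simp add: tensor_eval_swap[OF comodule_is_tensor[OF \<delta>V] comodule_is_tensor[OF \<delta>W] \<gamma>_act \<gamma>_act'])
  finally show ?thesis
    by (simp add: twist_form_def)
qed

lemma tens_pullback_twist_form_indL_coact:
  assumes "comodule \<Delta> \<epsilon> \<delta>V" "comodule \<Delta>C \<epsilon>C \<delta>W" "alg_module actW"
    "mod_comod_compat \<Delta> actC actW \<delta>W" "\<And>c. clinear (\<lambda>a. actC a c)" "\<And>a. clinear (actC a)"
  shows "teq3 (indR_coact \<delta>W (tens_pullback (twist_form \<delta>V actW) t))
           (\<lambda>\<gamma>. indL_coact \<delta>V \<delta>W actC t
                  (\<lambda>v w c. tens_pullback (twist_form \<delta>V actW) (tens v w) (\<lambda>v' w'. \<gamma> v' w' c)))"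
  unfolding teq3_def indR_coact_def indL_coact_def tens_pullback_def tens_def
  by (intro allI impI arg_cong[where f = t] ext) (rule twist_form_coact[OF assms])

theorem mainTheorem7:
  fixes \<Delta> :: "'a::calg \<Rightarrow> ('a, 'a) tens" and \<epsilon> :: "'a \<Rightarrow> complex"
    and S :: "'a \<Rightarrow> 'a" and st :: "'a \<Rightarrow> 'a"
    and \<iota> :: "'b::calg \<Rightarrow> 'a" and stB :: "'b \<Rightarrow> 'b" and \<delta>B :: "'b \<Rightarrow> ('b, 'a) tens"
    and \<pi> :: "'a \<Rightarrow> 'c::cvec" and \<Delta>C :: "'c \<Rightarrow> ('c, 'c) tens" and \<epsilon>C :: "'c \<Rightarrow> complex"
    and actC :: "'a \<Rightarrow> 'c \<Rightarrow> 'c" and dagC :: "'c \<Rightarrow> 'c"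
    and ipV :: "'v::cvec \<Rightarrow> 'v \<Rightarrow> complex" and actV :: "'b \<Rightarrow> 'v \<Rightarrow> 'v"
    and \<delta>V :: "'v \<Rightarrow> ('v, 'a) tens"
    and ipW :: "'w::cvec \<Rightarrow> 'w \<Rightarrow> complex" and actW :: "'a \<Rightarrow> 'w \<Rightarrow> 'w"
    and \<delta>W :: "'w \<Rightarrow> ('w, 'c) tens"
  assumes A: "cqg_hopf_star_algebra \<Delta> \<epsilon> S st"
    and B: "right_coideal_star_subalg \<Delta> st \<iota> stB \<delta>B"
    and C: "quotient_coalgebra \<Delta> \<epsilon> S st \<iota> \<pi> \<Delta>C \<epsilon>C actC dagC"
    and V: "B_Rep_A \<Delta> \<epsilon> S st stB \<delta>B ipV actV \<delta>V"
    and W: "A_Rep_C \<Delta> st \<Delta>C \<epsilon>C actC dagC ipW actW \<delta>W"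
  shows "\<exists>U. unitary_iso (tens_ip ipV ipW)
                (indL_act actV) (indL_coact \<delta>V \<delta>W actC)
                (indR_act \<delta>B actV actW) (indR_coact \<delta>W) U"
proof -
  have hopf: "hopf_star_algebra \<Delta> \<epsilon> S st"
    using A by (simp add: cqg_hopf_star_algebra_def)
  have \<delta>B: "is_tensor (\<delta>B b)" for b
    using B by (simp add: right_coideal_star_subalg_def)
  have V': "pre_hilbert ipV" "alg_module actV" "comodule \<Delta> \<epsilon> \<delta>V"
    "mod_comod_compat \<delta>B (\<lambda>a y. a * y) actV \<delta>V" "rep_compat stB (\<lambda>a. st (S a)) ipV actV \<delta>V"
    using V by (simp_all add: B_Rep_A_def)
  have W': "pre_hilbert ipW" "alg_module actW" "comodule \<Delta>C \<epsilon>C \<delta>W"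
    "mod_comod_compat \<Delta> actC actW \<delta>W" "rep_compat st dagC ipW actW \<delta>W"
    using W by (simp_all add: A_Rep_C_def)
  show ?thesis
  proof (intro exI[of _ "tens_pullback (twist_form \<delta>V actW)"]
      unitary_iso_tens_pullback_twist_form[OF hopf V'(3) W'(2)])
    show "tens_ip ipV ipW (tens_pullback (twist_form \<delta>V actW) t) (tens_pullback (twist_form \<delta>V actW) s)
        = tens_ip ipV ipW t s" if "is_tensor t" and "is_tensor s" for t s
      by (rule tens_ip_tens_pullback_twist_form[OF hopf V'(1,3,5) W'(1,2,5) that(2)])
  qed (simp_all add: tens_pullback_twist_form_indL_act[OF V'(3,2) W'(2) V'(4) \<delta>B]
      tens_pullback_twist_form_indL_coact[OF V'(3) W'(3,2,4) quotient_coalgebra_act_clinear[OF C]])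
qed

end
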